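(* Let $q=2^h$ with $h\equiv 1\pmod 2$, and let $A_{1,3},A_{1,4},A_{2,3},A_{2,4},A_{3,4}\in\mathbb F_{q^4}$ with $(A_{1,3},A_{2,3},A_{3,4})\neq(0,0,0)$. Then the system $$\begin{cases} A_{2,3}u+A_{1,3}v=0\\ A_{2,4}u+A_{1,4}v=0\\ A_{3,4}v+A_{2,4}(u^q+v^{q^2})+A_{2,3}(u^{q^2}+v^{q^2}+v^q)=0\\ A_{3,4}u+A_{1,4}(u^q+v^{q^2})+A_{1,3}(u^{q^2}+v^{q^2}+v^q)=0 \end{cases}$$ has at most $q^2$ solutions $(u,v)\in\mathbb F_{q^4}^2$. *)

theory Defs
  imports Main
begin

end

theory Submission
  imports Defs "HOL-Computational_Algebra.Polynomial"
begin

(* A field with q^4 elements, q = 2^h, has characteristic 2, and x \<mapsto> x^q is additive on it.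
   In each case the first equation (or the third and fourth) expresses (u, v) as (a t, b t) for a
   single unknown t, and one of the last two equations becomes a nonzero polynomial
   a0 t + a1 t^q + a2 t^(q^2) in t, which has at most q^2 roots.  The only delicate case is
   A13 \<noteq> 0, v = x u: all three coefficients vanish only if y = x^q solves y^(q+1) + y^q + 1 = 0.
   That means y^q = 1/(y+1), and as the Moebius map t \<mapsto> 1/(t+1) has order 3, y^(q^3) = y;
   with y^(q^4) = y this forces y^q = y, so y is a primitive cube root of unity, whereas
   q \<equiv> 2 (mod 3) for odd h gives y^q = y^2 \<noteq> y. *)

lemma of_nat_card_UNIV_eq_0: "of_nat (card (UNIV :: 'a::{ring_1, finite} set)) = (0::'a)"
proof -
  have "(\<Sum>y\<in>UNIV. 1 + y) = (\<Sum>y\<in>(UNIV::'a set). y)"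
    by (rule sum.reindex_bij_witness[where i="\<lambda>y. y - 1" and j="\<lambda>y. 1 + y"]) auto
  then show ?thesis
    by (simp add: sum.distrib)
qed

lemma CHAR_eq_2_if_card_power_of_2:
  assumes "card (UNIV :: 'a::{field, finite} set) = 2 ^ k"
  shows "CHAR('a) = 2"
proof -
  have prime: "prime CHAR('a)"
    by (intro prime_CHAR_semidom finite_imp_CHAR_pos) simp
  have "CHAR('a) dvd 2 ^ k"
    unfolding assms[symmetric] of_nat_eq_0_iff_char_dvd[symmetric]
    by (rule of_nat_card_UNIV_eq_0)
  then have "CHAR('a) dvd 2"
    using prime by (rule prime_dvd_power[rotated])
  then show ?thesis
    using prime two_is_prime_nat by (rule primes_dvd_imp_eq[rotated 2])
qed

lemma CHAR_2_two_eq_0: "CHAR('a::semiring_1) = 2 \<Longrightarrow> (2::'a) = 0"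
  using of_nat_CHAR[where 'a = 'a] by simp

lemma field_power_card_eq_same:
  fixes x :: "'a::{field, finite}"
  shows "x ^ card (UNIV :: 'a set) = x"
proof (cases "x = 0")
  case True
  then show ?thesis
    using finite_UNIV_card_ge_0[where 'a = 'a] by simp
next
  case False
  let ?U = "UNIV - {0::'a}"
  have "(\<Prod>y\<in>?U. x * y) = (\<Prod>y\<in>?U. y)"
    by (rule prod.reindex_bij_witness[where i = "\<lambda>y. y / x" and j = "\<lambda>y. x * y"])
       (use False in auto)
  then have "x ^ card ?U * \<Prod>?U = \<Prod>?U"
    by (simp add: prod.distrib)
  then have "x ^ card ?U = 1"
    by simp
  moreover have "card (UNIV :: 'a set) = card ?U + 1"
    by (simp add: card_Diff_singleton finite_UNIV_card_ge_0)
  ultimately show ?thesis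
    by (metis power_add power_one_right mult_1)
qed

lemma less_power2_if_gt_1: "1 < q \<Longrightarrow> q < (q::nat) ^ 2"
  by (simp add: power2_eq_square)

lemma card_le_image_of_trinomial_roots:
  fixes c0 c1 c2 :: "'a::field"
  assumes "1 < m" "m < n" "(c0, c1, c2) \<noteq> (0, 0, 0)"
    and "S \<subseteq> g ` {t. c0 * t + c1 * t ^ m + c2 * t ^ n = 0}"
  shows "card S \<le> n"
proof -
  define p where "p = monom c0 1 + monom c1 m + monom c2 n"
  have "coeff p 1 = c0" "coeff p m = c1" "coeff p n = c2"
    using assms(1,2) by (simp_all add: p_def coeff_monom)
  then have "p \<noteq> 0"
    using assms(3) by auto
  have "degree p \<le> n"
    unfolding p_def using assms(1,2)
    by (intro degree_add_le degree_monom_le[THEN order_trans]) auto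
  have roots: "{t. c0 * t + c1 * t ^ m + c2 * t ^ n = 0} = {t. poly p t = 0}"
    by (simp add: p_def poly_monom)
  have "card S \<le> card {t. poly p t = 0}"
    using assms(4) poly_roots_finite[OF \<open>p \<noteq> 0\<close>] unfolding roots
    by (rule surj_card_le[rotated])
  also have "\<dots> \<le> n"
    using card_poly_roots_bound[OF \<open>p \<noteq> 0\<close>] \<open>degree p \<le> n\<close> by linarith
  finally show ?thesis .
qed

lemma power_2_mod_3_odd:
  assumes "odd h"
  shows "(2::nat) ^ h mod 3 = 2"
proof -
  obtain m where "h = 2 * m + 1"
    using assms oddE by blast
  moreover have "(4::nat) ^ m mod 3 = 1"
    by (induction m) (auto simp: mod_mult_right_eq[symmetric])
  ultimately show ?thesis
    by (simp add: power_mult mod_mult_right_eq[symmetric])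
qed

lemma one_over_plus_one_iterated_3_times:
  fixes t :: "'a::field"
  assumes two: "(2::'a) = 0" and "t \<noteq> 0" "t + 1 \<noteq> 0"
  shows "1 / (1 / (1 / (t + 1) + 1) + 1) = t"
proof -
  have "1 / (t + 1) + 1 = (t + 2) / (t + 1)"
    using assms(3) by (simp add: field_simps)
  also have "\<dots> = t / (t + 1)"
    using two by simp
  finally have "1 / (1 / (t + 1) + 1) + 1 = (t + 1) / t + 1"
    by simp
  also have "\<dots> = (t * 2 + 1) / t"
    using assms(2) by (simp add: field_simps)
  also have "\<dots> = 1 / t"
    using two by simp
  finally show ?thesis
    by simp
qed

lemma power_q_cube_eq_self_if_root:
  fixes y :: "'a::field"
  assumes char: "CHAR('a) = 2" and q: "q = 2 ^ h"
    and root: "y ^ (q + 1) + y ^ q + 1 = 0"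
  shows "y ^ (q ^ 3) = y"
proof -
  have two: "(2::'a) = 0"
    using char by (rule CHAR_2_two_eq_0)
  have frob: "(s + t) ^ q = s ^ q + t ^ q" for s t :: 'a
    using freshmans_dream'[where 'a = 'a and m = q and n = h] char q by simp
  have "y ^ q * (y + 1) + 1 = 0"
    using root by (simp add: power_add algebra_simps)
  then have inv: "y ^ q * (y + 1) = 1"
    using uminus_CHAR_2[OF char] by (simp add: add_eq_0_iff2)
  then have "y + 1 \<noteq> 0" and "y \<noteq> 0"
    using q by (auto simp: power_0_left)
  from inv have yq: "y ^ q = 1 / (y + 1)"
    using \<open>y + 1 \<noteq> 0\<close> by (simp add: eq_divide_eq)
  have mobius: "(1 / (t + 1)) ^ q = 1 / (t ^ q + 1)" for t :: 'a
    by (simp add: power_one_over frob)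
  have power_q_Suc: "y ^ (q ^ Suc k) = (y ^ (q ^ k)) ^ q" for k
    by (simp only: power_Suc2 power_mult)
  have "y ^ (q ^ 3) = 1 / (1 / (1 / (y + 1) + 1) + 1)"
    unfolding numeral_3_eq_3 power_q_Suc power_0 power_one_right yq mobius ..
  also have "\<dots> = y"
    using one_over_plus_one_iterated_3_times[OF two \<open>y \<noteq> 0\<close> \<open>y + 1 \<noteq> 0\<close>] .
  finally show ?thesis .
qed

lemma power_ne_self_if_cube_root_of_unity:
  fixes y :: "'a::field"
  assumes char: "CHAR('a) = 2" and root: "y ^ 2 + y + 1 = 0" and q: "q mod 3 = 2"
  shows "y ^ q \<noteq> y"
proof -
  have two: "(2::'a) = 0"
    using char by (rule CHAR_2_two_eq_0)
  have sq: "y ^ 2 = y + 1"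
    using root uminus_CHAR_2[OF char] by (simp add: add_eq_0_iff2 add.assoc)
  have "y ^ 3 = 1"
    using sq two by (simp add: power3_eq_cube power2_eq_square algebra_simps)
  moreover have "q = 3 * (q div 3) + 2"
    using q by presburger
  then have "y ^ q = (y ^ 3) ^ (q div 3) * y ^ 2"
    by (metis power_add power_mult)
  ultimately have "y ^ q = y ^ 2"
    by simp
  with sq show ?thesis
    by simp
qed

lemma power_Suc_add_power_add_1_neq_0:
  fixes y :: "'a::field"
  assumes char: "CHAR('a) = 2" and q: "q = 2 ^ h" and "odd h"
    and subfield: "y ^ (q ^ 4) = y"
  shows "y ^ (q + 1) + y ^ q + 1 \<noteq> 0"
proof
  assume root: "y ^ (q + 1) + y ^ q + 1 = 0"
  have "q ^ 4 = q ^ 3 * q"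
    using power_Suc2[of q 3] by simp
  then have "y ^ (q ^ 4) = (y ^ (q ^ 3)) ^ q"
    by (simp only: power_mult)
  then have fixed: "y ^ q = y"
    using power_q_cube_eq_self_if_root[OF char q root] subfield by simp
  then have "y ^ 2 + y + 1 = 0"
    using root by (simp add: power_add power2_eq_square)
  moreover have "q mod 3 = 2"
    using q \<open>odd h\<close> by (simp add: power_2_mod_3_odd)
  ultimately show False
    using power_ne_self_if_cube_root_of_unity[OF char] fixed by blast
qed

definition system_solutions ::
    "'a::field \<Rightarrow> 'a \<Rightarrow> 'a \<Rightarrow> 'a \<Rightarrow> 'a \<Rightarrow> nat \<Rightarrow> ('a \<times> 'a) set"
  where "system_solutions A13 A14 A23 A24 A34 q = {(u, v).
            A23 * u + A13 * v = 0 \<and>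
            A24 * u + A14 * v = 0 \<and>
            A34 * v + A24 * (u ^ q + v ^ (q ^ 2)) + A23 * (u ^ (q ^ 2) + v ^ (q ^ 2) + v ^ q) = 0 \<and>
            A34 * u + A14 * (u ^ q + v ^ (q ^ 2)) + A13 * (u ^ (q ^ 2) + v ^ (q ^ 2) + v ^ q) = 0}"

lemma card_system_solutions_le_if_A13_nonzero:
  fixes A13 A14 A23 A24 A34 :: "'a::{field, finite}"
  assumes char: "CHAR('a) = 2" and q: "q = 2 ^ h" and "odd h"
    and card: "card (UNIV :: 'a set) = q ^ 4" and "A13 \<noteq> 0"
  shows "card (system_solutions A13 A14 A23 A24 A34 q) \<le> q ^ 2"
proof -
  define x where "x = A23 / A13"
  have "1 < q"
    using q odd_pos[OF \<open>odd h\<close>] one_less_power[of "2::nat" h] by simp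
  have on_line: "v = x * u" if "A23 * u + A13 * v = 0" for u v
  proof -
    have "A13 * v = A23 * u"
      using that uminus_CHAR_2[OF char] by (simp add: add_eq_0_iff2)
    then show ?thesis
      using \<open>A13 \<noteq> 0\<close> by (simp add: x_def field_simps)
  qed
  have "system_solutions A13 A14 A23 A24 A34 q \<subseteq> (\<lambda>t. (t, x * t)) `
      {t. A34 * t + (A14 + A13 * x ^ q) * t ^ q
          + (A14 * x ^ (q ^ 2) + A13 + A13 * x ^ (q ^ 2)) * t ^ (q ^ 2) = 0}"
  proof clarify
    fix u v
    assume "(u, v) \<in> system_solutions A13 A14 A23 A24 A34 q"
    then have "v = x * u" and
      "A34 * u + A14 * (u ^ q + v ^ (q ^ 2)) + A13 * (u ^ (q ^ 2) + v ^ (q ^ 2) + v ^ q) = 0"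
      using on_line by (auto simp: system_solutions_def)
    then show "(u, v) \<in> (\<lambda>t. (t, x * t)) ` {t. A34 * t + (A14 + A13 * x ^ q) * t ^ q
        + (A14 * x ^ (q ^ 2) + A13 + A13 * x ^ (q ^ 2)) * t ^ (q ^ 2) = 0}"
      by (auto simp: power_mult_distrib algebra_simps)
  qed
  moreover have
    "(A34, A14 + A13 * x ^ q, A14 * x ^ (q ^ 2) + A13 + A13 * x ^ (q ^ 2)) \<noteq> (0, 0, 0)"
    (is "?coeffs \<noteq> _")
  proof
    assume "?coeffs = (0, 0, 0)"
    then have "A14 = A13 * x ^ q" and c2: "A14 * x ^ (q ^ 2) + A13 + A13 * x ^ (q ^ 2) = 0"
      using uminus_CHAR_2[OF char] by (auto simp: add_eq_0_iff2)
    have "(x ^ q) ^ q = x ^ (q ^ 2)"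
      by (simp add: power2_eq_square power_mult)
    then have "A13 * ((x ^ q) ^ (q + 1) + (x ^ q) ^ q + 1) = 0"
      using c2 \<open>A14 = A13 * x ^ q\<close> by (simp add: power_add algebra_simps)
    moreover have "(x ^ q) ^ (q ^ 4) = x ^ q"
      using field_power_card_eq_same card by metis
    ultimately show False
      using power_Suc_add_power_add_1_neq_0[OF char q \<open>odd h\<close>] \<open>A13 \<noteq> 0\<close> by simp
  qed
  ultimately show ?thesis
    using \<open>1 < q\<close> less_power2_if_gt_1 by (intro card_le_image_of_trinomial_roots)
qed

lemma card_system_solutions_le_if_A13_zero_A23_nonzero:
  fixes A14 A23 A24 A34 :: "'a::field"
  assumes "1 < q" and "A23 \<noteq> 0"
  shows "card (system_solutions 0 A14 A23 A24 A34 q) \<le> q ^ 2"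
proof -
  have "system_solutions 0 A14 A23 A24 A34 q \<subseteq> (\<lambda>t. (0, t)) `
      {t. A34 * t + A23 * t ^ q + (A24 + A23) * t ^ (q ^ 2) = 0}"
    using assms by (auto simp: system_solutions_def zero_power algebra_simps)
  moreover have "(A34, A23, A24 + A23) \<noteq> (0, 0, 0)"
    using assms by simp
  ultimately show ?thesis
    using \<open>1 < q\<close> less_power2_if_gt_1 by (intro card_le_image_of_trinomial_roots)
qed

lemma card_system_solutions_le_if_A13_A23_zero:
  fixes A14 A24 A34 :: "'a::field"
  assumes "1 < q" and "A34 \<noteq> 0"
  shows "card (system_solutions 0 A14 0 A24 A34 q) \<le> q ^ 2"
proof -
  define a where "a = - A14 / A34"
  define b where "b = - A24 / A34"
  have "system_solutions 0 A14 0 A24 A34 q \<subseteq> (\<lambda>t. (a * t, b * t)) `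
      {t. 1 * t + - (a ^ q) * t ^ q + - (b ^ (q ^ 2)) * t ^ (q ^ 2) = 0}"
  proof clarify
    fix u v
    assume "(u, v) \<in> system_solutions 0 A14 0 A24 A34 q"
    then have eqs: "A34 * v + A24 * (u ^ q + v ^ (q ^ 2)) = 0"
      "A34 * u + A14 * (u ^ q + v ^ (q ^ 2)) = 0"
      by (auto simp: system_solutions_def)
    define t where "t = u ^ q + v ^ (q ^ 2)"
    have u: "u = a * t" and v: "v = b * t"
      using eqs \<open>A34 \<noteq> 0\<close> unfolding t_def
      by (auto simp: a_def b_def field_simps eq_neg_iff_add_eq_0)
    have "(a * t) ^ q + (b * t) ^ (q ^ 2) = t"
      unfolding u[symmetric] v[symmetric] by (rule t_def[symmetric])
    moreover have "1 * t + - (a ^ q) * t ^ q + - (b ^ (q ^ 2)) * t ^ (q ^ 2)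
        = t - ((a * t) ^ q + (b * t) ^ (q ^ 2))"
      by (simp add: power_mult_distrib algebra_simps)
    ultimately show "(u, v) \<in> (\<lambda>t. (a * t, b * t)) `
        {t. 1 * t + - (a ^ q) * t ^ q + - (b ^ (q ^ 2)) * t ^ (q ^ 2) = 0}"
      using u v by auto
  qed
  moreover have "(1 :: 'a, - (a ^ q), - (b ^ (q ^ 2))) \<noteq> (0, 0, 0)"
    by simp
  ultimately show ?thesis
    using \<open>1 < q\<close> less_power2_if_gt_1 by (intro card_le_image_of_trinomial_roots)
qed

theorem proposition4p4:
  fixes A13 A14 A23 A24 A34 :: "'a :: {field, finite}"
    and h :: nat and q :: nat
  assumes q_def: "q = 2 ^ h"
    and h_odd: "odd h"
    and card_field: "card (UNIV :: 'a set) = q ^ 4"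
    and nonzero: "(A13, A23, A34) \<noteq> (0, 0, 0)"
  shows "card {(u :: 'a, v :: 'a).
            A23 * u + A13 * v = 0 \<and>
            A24 * u + A14 * v = 0 \<and>
            A34 * v + A24 * (u ^ q + v ^ (q ^ 2)) + A23 * (u ^ (q ^ 2) + v ^ (q ^ 2) + v ^ q) = 0 \<and>
            A34 * u + A14 * (u ^ q + v ^ (q ^ 2)) + A13 * (u ^ (q ^ 2) + v ^ (q ^ 2) + v ^ q) = 0}
         \<le> q ^ 2"
proof -
  have "1 < q"
    using q_def odd_pos[OF h_odd] one_less_power[of "2::nat" h] by simp
  have char: "CHAR('a) = 2"
    using card_field q_def
    by (intro CHAR_eq_2_if_card_power_of_2[of "h * 4"]) (simp add: power_mult)
  have "card (system_solutions A13 A14 A23 A24 A34 q) \<le> q ^ 2"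
  proof (cases "A13 = 0")
    case False
    then show ?thesis
      using card_system_solutions_le_if_A13_nonzero[OF char q_def h_odd card_field] by blast
  next
    case True
    then show ?thesis
      using nonzero \<open>1 < q\<close> card_system_solutions_le_if_A13_zero_A23_nonzero
        card_system_solutions_le_if_A13_A23_zero by (cases "A23 = 0") auto
  qed
  then show ?thesis
    by (simp add: system_solutions_def)
qed

end
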